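(* For all integers $m,n\geq 1$, \[p^{od}_{ed}(m,n)-p^{od}_{ed}(m,n-1)=D_o(m,n)-D_e(m,n-1).\]
   Context: $\mathcal{P}^{od}_{ed}$ is the set of integer partitions whose parts are all distinct and such that every even part is smaller than every odd part. Partitions consisting only of odd parts, or only of even parts, are allowed. For integers $m\ge 1$, $n\ge 0$: - $p^{od}_{ed}(m,n)$ is the number of partitions of $n$ in $\mathcal{P}^{od}_{ed}$ with exactly $m$ parts; in particular $p^{od}_{ed}(m,0)=0$. - $D_o(m,n)$ is the number of partitions of $n$ into exactly $m$ distinct odd parts. - $D_e(m,n)$ is the number of partitions of $n$ into exactly $m$ distinct even parts. *)

theory Defs
  imports Main
begin

text \<open>A partition into distinct parts is represented by its (finite) set of parts,
  all positive. The parts sum to n and there are exactly m of them.\<close>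

definition distinct_parts :: "nat \<Rightarrow> nat \<Rightarrow> nat set set" where
  "distinct_parts m n = {S. finite S \<and> 0 \<notin> S \<and> card S = m \<and> \<Sum>S = n}"

definition p_od_ed :: "nat \<Rightarrow> nat \<Rightarrow> nat" where
  "p_od_ed m n = card {S \<in> distinct_parts m n.
      \<forall>a\<in>S. \<forall>b\<in>S. even a \<and> odd b \<longrightarrow> a < b}"

definition D_o :: "nat \<Rightarrow> nat \<Rightarrow> nat" where
  "D_o m n = card {S \<in> distinct_parts m n. \<forall>a\<in>S. odd a}"

definition D_e :: "nat \<Rightarrow> nat \<Rightarrow> nat" where
  "D_e m n = card {S \<in> distinct_parts m n. \<forall>a\<in>S. even a}"

end

theory Submission
  imports Defs
begin

text \<open>Split the partitions counted by \<open>p_od_ed\<close> according to whether they contain an even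
  part and whether they contain an odd part. Those without even parts are counted by \<open>D_o\<close>,
  those without odd parts by \<open>D_e\<close>. The remaining classes are matched by a bijection: raising
  the least odd part of a partition of \<open>n - 1\<close> by one gives a partition of \<open>n\<close> whose greatest
  even part is the new one, and lowering that part by one undoes the move. Since every even part
  lies below every odd part, neither move collides with an existing part or breaks the order.\<close>

definition evens_below_odds :: "nat set \<Rightarrow> bool" where
  "evens_below_odds S \<longleftrightarrow> (\<forall>a\<in>S. \<forall>b\<in>S. even a \<and> odd b \<longrightarrow> a < b)"

definition raise_least_odd :: "nat set \<Rightarrow> nat set" where
  "raise_least_odd S = (let q = Min {a\<in>S. odd a} in insert (Suc q) (S - {q}))"

definition lower_greatest_even :: "nat set \<Rightarrow> nat set" where
  "lower_greatest_even T = (let e = Max {a\<in>T. even a} in insert (e - 1) (T - {e}))"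

definition od_ed_with_even :: "nat \<Rightarrow> nat \<Rightarrow> nat set set" where
  "od_ed_with_even m n = {S \<in> distinct_parts m n. evens_below_odds S \<and> (\<exists>a\<in>S. even a)}"

definition od_ed_with_odd :: "nat \<Rightarrow> nat \<Rightarrow> nat set set" where
  "od_ed_with_odd m n = {S \<in> distinct_parts m n. evens_below_odds S \<and> (\<exists>a\<in>S. odd a)}"

lemma
  fixes f :: "'a \<Rightarrow> 'b::comm_monoid_add"
  assumes "finite S" and "x \<in> S" and "y \<notin> S"
  shows card_replace: "card (insert y (S - {x})) = card S"
    and sum_replace: "sum f (insert y (S - {x})) + f x = sum f S + f y"
proof -
  have "y \<notin> S - {x}" using assms(3) by simp
  then show "card (insert y (S - {x})) = card S"
    using card.remove[OF assms(1,2)] assms(1) by simp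
  show "sum f (insert y (S - {x})) + f x = sum f S + f y"
    using assms \<open>y \<notin> S - {x}\<close> by (simp add: sum.remove[of S x] add_ac)
qed

lemma insert_Suc_least_odd:
  assumes S: "finite S" "evens_below_odds S"
    and q: "q \<in> S" "odd q" "\<And>a. a \<in> S \<Longrightarrow> odd a \<Longrightarrow> q \<le> a"
  defines "T \<equiv> insert (Suc q) (S - {q})"
  shows "Suc q \<notin> S" and "evens_below_odds T" and "Max {a\<in>T. even a} = Suc q"
proof -
  have below_q: "a < q" if "a \<in> S" "even a" for a
    using S(2) that q(1,2) unfolding evens_below_odds_def by blast
  then show "Suc q \<notin> S" using q(2) by fastforce
  show "evens_below_odds T"
    unfolding evens_below_odds_def
  proof (intro ballI impI)
    fix a b assume "a \<in> T" "b \<in> T" and ab: "even a \<and> odd b"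
    then have b: "b \<in> S" "b \<noteq> q" using q(2) by (auto simp: T_def)
    show "a < b"
    proof (cases "a = Suc q")
      case True
      have "q < b" using q(3)[OF b(1)] b(2) ab by simp
      then show ?thesis using True q(2) ab by presburger
    next
      case False
      then have "a \<in> S" using \<open>a \<in> T\<close> by (simp add: T_def)
      then show ?thesis using S(2) b(1) ab unfolding evens_below_odds_def by blast
    qed
  qed
  show "Max {a\<in>T. even a} = Suc q"
    by (rule Max_eqI) (use S(1) q(2) in \<open>auto simp: T_def dest: below_q\<close>)
qed

lemma insert_pred_greatest_even:
  assumes T: "finite T" "0 \<notin> T" "evens_below_odds T"
    and e: "e \<in> T" "even e" "\<And>a. a \<in> T \<Longrightarrow> even a \<Longrightarrow> a \<le> e"
  defines "S \<equiv> insert (e - 1) (T - {e})"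
  shows "e - 1 \<notin> T" and "odd (e - 1)" and "Suc (e - 1) = e"
    and "evens_below_odds S" and "Min {a\<in>S. odd a} = e - 1"
proof -
  have "e \<noteq> 0" using e(1) T(2) by metis
  then have "e \<ge> 2" using e(2) by presburger
  then show odd: "odd (e - 1)" and "Suc (e - 1) = e" using e(2) by auto
  have above_e: "e < b" if "b \<in> T" "odd b" for b
    using T(3) that e(1,2) unfolding evens_below_odds_def by blast
  then show "e - 1 \<notin> T" using odd by fastforce
  show "evens_below_odds S"
    unfolding evens_below_odds_def
  proof (intro ballI impI)
    fix a b assume "a \<in> S" "b \<in> S" and ab: "even a \<and> odd b"
    then have a: "a \<in> T" "a \<noteq> e" using odd by (auto simp: S_def)
    show "a < b"
    proof (cases "b = e - 1")
      case True
      have "a < e" using e(3)[OF a(1)] a(2) ab by simp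
      then show ?thesis using True e(2) ab by presburger
    next
      case False
      then have "b \<in> T" using \<open>b \<in> S\<close> by (simp add: S_def)
      then show ?thesis using T(3) a(1) ab unfolding evens_below_odds_def by blast
    qed
  qed
  show "Min {a\<in>S. odd a} = e - 1"
    by (rule Min_eqI) (use T(1) odd in \<open>auto simp: S_def dest: above_e\<close>)
qed

lemma raise_least_odd_in_od_ed_with_even:
  assumes "S \<in> od_ed_with_odd m k"
  shows "raise_least_odd S \<in> od_ed_with_even m (Suc k)"
    and "lower_greatest_even (raise_least_odd S) = S"
proof -
  have S: "finite S" "0 \<notin> S" "card S = m" "\<Sum>S = k" "evens_below_odds S" "\<exists>a\<in>S. odd a"
    using assms unfolding od_ed_with_odd_def distinct_parts_def by auto
  define q where "q = Min {a\<in>S. odd a}"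
  have odds: "finite {a\<in>S. odd a}" "{a\<in>S. odd a} \<noteq> {}" using S(1,6) by auto
  have q: "q \<in> S" "odd q" "\<And>a. a \<in> S \<Longrightarrow> odd a \<Longrightarrow> q \<le> a"
    using Min_in[OF odds] Min_le[OF odds(1)] by (auto simp: q_def)
  have T: "raise_least_odd S = insert (Suc q) (S - {q})"
    by (simp add: raise_least_odd_def q_def Let_def)
  note props = insert_Suc_least_odd[OF S(1,5) q]
  have "sum id (raise_least_odd S) + q = k + Suc q"
    using sum_replace[OF S(1) q(1) props(1), of id] S(4) by (simp add: T)
  then show "raise_least_odd S \<in> od_ed_with_even m (Suc k)"
    using S(1-3) props(2) q(2) card_replace[OF S(1) q(1) props(1)]
    by (auto simp: T od_ed_with_even_def distinct_parts_def)
  show "lower_greatest_even (raise_least_odd S) = S"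
    using props(1,3) q(1) by (auto simp: lower_greatest_even_def T)
qed

lemma lower_greatest_even_in_od_ed_with_odd:
  assumes "T \<in> od_ed_with_even m (Suc k)"
  shows "lower_greatest_even T \<in> od_ed_with_odd m k"
    and "raise_least_odd (lower_greatest_even T) = T"
proof -
  have T: "finite T" "0 \<notin> T" "card T = m" "\<Sum>T = Suc k" "evens_below_odds T" "\<exists>a\<in>T. even a"
    using assms unfolding od_ed_with_even_def distinct_parts_def by auto
  define e where "e = Max {a\<in>T. even a}"
  have evens: "finite {a\<in>T. even a}" "{a\<in>T. even a} \<noteq> {}" using T(1,6) by auto
  have e: "e \<in> T" "even e" "\<And>a. a \<in> T \<Longrightarrow> even a \<Longrightarrow> a \<le> e"
    using Max_in[OF evens] Max_ge[OF evens(1)] by (auto simp: e_def)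
  have S: "lower_greatest_even T = insert (e - 1) (T - {e})"
    by (simp add: lower_greatest_even_def e_def Let_def)
  note props = insert_pred_greatest_even[OF T(1,2,5) e]
  have "sum id (lower_greatest_even T) + e = Suc k + (e - 1)"
    using sum_replace[OF T(1) e(1) props(1), of id] T(4) by (simp add: S)
  then have "sum id (lower_greatest_even T) = k" using props(3) by simp
  then show "lower_greatest_even T \<in> od_ed_with_odd m k"
    using T(1-3) props(2,4) card_replace[OF T(1) e(1) props(1)]
    by (auto simp: S od_ed_with_odd_def distinct_parts_def)
  show "raise_least_odd (lower_greatest_even T) = T"
    using props(1,3,5) e(1) by (auto simp: raise_least_odd_def S)
qed

lemma card_od_ed_with_odd_eq_with_even:
  "card (od_ed_with_odd m k) = card (od_ed_with_even m (Suc k))"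
proof (rule bij_betw_same_card[of raise_least_odd])
  show "bij_betw raise_least_odd (od_ed_with_odd m k) (od_ed_with_even m (Suc k))"
  proof (rule bij_betw_byWitness[of _ lower_greatest_even])
    show "\<forall>S\<in>od_ed_with_odd m k. lower_greatest_even (raise_least_odd S) = S"
      using raise_least_odd_in_od_ed_with_even(2) by blast
    show "\<forall>T\<in>od_ed_with_even m (Suc k). raise_least_odd (lower_greatest_even T) = T"
      using lower_greatest_even_in_od_ed_with_odd(2) by blast
    show "raise_least_odd ` od_ed_with_odd m k \<subseteq> od_ed_with_even m (Suc k)"
      using raise_least_odd_in_od_ed_with_even(1) by blast
    show "lower_greatest_even ` od_ed_with_even m (Suc k) \<subseteq> od_ed_with_odd m k"
      using lower_greatest_even_in_od_ed_with_odd(1) by blast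
  qed
qed

lemma finite_distinct_parts: "finite (distinct_parts m n)"
proof (rule finite_subset)
  show "distinct_parts m n \<subseteq> Pow {0..n}"
  proof
    fix S assume "S \<in> distinct_parts m n"
    then have "finite S" "\<Sum>S = n" unfolding distinct_parts_def by auto
    moreover have "x \<le> \<Sum>S" if "x \<in> S" for x
      using member_le_sum[OF that _ \<open>finite S\<close>, of id] by simp
    ultimately show "S \<in> Pow {0..n}" by auto
  qed
qed simp

lemma
  shows p_od_ed_eq_with_even_plus_D_o: "p_od_ed m n = card (od_ed_with_even m n) + D_o m n"
    and p_od_ed_eq_with_odd_plus_D_e: "p_od_ed m n = card (od_ed_with_odd m n) + D_e m n"
proof -
  have fin: "finite {S \<in> distinct_parts m n. P S}" for P
    using finite_distinct_parts by simp
  have "p_od_ed m n = card (od_ed_with_even m n \<union> {S \<in> distinct_parts m n. \<forall>a\<in>S. odd a})"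
    unfolding p_od_ed_def od_ed_with_even_def evens_below_odds_def by (rule arg_cong[of _ _ card]) auto
  also have "\<dots> = card (od_ed_with_even m n) + D_o m n"
    unfolding D_o_def od_ed_with_even_def by (rule card_Un_disjoint) (use fin in auto)
  finally show "p_od_ed m n = card (od_ed_with_even m n) + D_o m n" .
  have "p_od_ed m n = card (od_ed_with_odd m n \<union> {S \<in> distinct_parts m n. \<forall>a\<in>S. even a})"
    unfolding p_od_ed_def od_ed_with_odd_def evens_below_odds_def by (rule arg_cong[of _ _ card]) auto
  also have "\<dots> = card (od_ed_with_odd m n) + D_e m n"
    unfolding D_e_def od_ed_with_odd_def by (rule card_Un_disjoint) (use fin in auto)
  finally show "p_od_ed m n = card (od_ed_with_odd m n) + D_e m n" .
qed

theorem mainTheorem1: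
  fixes m n :: nat
  assumes "m \<ge> 1" and "n \<ge> 1"
  shows "int (p_od_ed m n) - int (p_od_ed m (n - 1)) = int (D_o m n) - int (D_e m (n - 1))"
proof -
  obtain k where n: "n = Suc k" using assms(2) by (cases n) auto
  have "p_od_ed m n = card (od_ed_with_even m n) + D_o m n"
    by (rule p_od_ed_eq_with_even_plus_D_o)
  moreover have "p_od_ed m (n - 1) = card (od_ed_with_even m n) + D_e m (n - 1)"
    using p_od_ed_eq_with_odd_plus_D_e[of m k] card_od_ed_with_odd_eq_with_even[of m k] n by simp
  ultimately show ?thesis by simp
qed

end
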